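(* Let $\varphi\colon\mathbb{R}\to(-\infty,+\infty]$ be a proper convex lower semi-continuous function with $\varphi(0)<+\infty$. Then at every $p\in\mathbb{R}$ where the right derivatives are defined, $(\varphi_\uparrow^* )'_+(p)=\max\{0,(\varphi^* )'_+(p)\}$.
   Context: $\varphi_\uparrow(x)=\varphi(x)$ for $x\ge0$ and $+\infty$ for $x<0$. $g^*(p)=\sup_{x\in\mathbb{R}}\{xp-g(x)\}$ is the convex conjugate, and $g'_+(x)=\lim_{h\downarrow0}(g(x+h)-g(x))/h$ is the right derivative. *)

theory Defs
  imports "HOL-Analysis.Analysis"
begin

text \<open>Extended-real valued functions \<open>real \<Rightarrow> ereal\<close> model functions into (-\<infinity>,+\<infinity>].\<close>

definition proper_fun :: "(real \<Rightarrow> ereal) \<Rightarrow> bool" where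
  "proper_fun g \<longleftrightarrow> (\<forall>x. g x \<noteq> -\<infinity>) \<and> (\<exists>x. g x \<noteq> \<infinity>)"

definition convex_fun :: "(real \<Rightarrow> ereal) \<Rightarrow> bool" where
  "convex_fun g \<longleftrightarrow> (\<forall>x y t. 0 \<le> t \<and> t \<le> 1 \<longrightarrow>
      g ((1 - t) * x + t * y) \<le> ereal (1 - t) * g x + ereal t * g y)"

definition lsc_fun :: "(real \<Rightarrow> ereal) \<Rightarrow> bool" where
  "lsc_fun g \<longleftrightarrow> (\<forall>x. g x \<le> Liminf (at x) g)"

definition convex_conj :: "(real \<Rightarrow> ereal) \<Rightarrow> real \<Rightarrow> ereal" where
  "convex_conj g p = (SUP x. ereal (x * p) - g x)"

definition up :: "(real \<Rightarrow> ereal) \<Rightarrow> real \<Rightarrow> ereal" where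
  "up g x = (if 0 \<le> x then g x else \<infinity>)"

definition has_rderiv :: "(real \<Rightarrow> ereal) \<Rightarrow> real \<Rightarrow> ereal \<Rightarrow> bool" where
  "has_rderiv g p D \<longleftrightarrow> \<bar>g p\<bar> \<noteq> \<infinity> \<and>
      ((\<lambda>h. (g (p + h) - g p) / ereal h) \<longlongrightarrow> D) (at_right 0)"

end

theory Submission
  imports Defs
begin

(*
  Write F for the conjugate of phi and G for the conjugate of phi_up. Then G <= F, G is
  nondecreasing, and splitting the supremum defining F q' into x < 0 and x >= 0 gives
  F q' <= max (F q) (G q') for q <= q'. If G p = F p, this forces F = G to the right of p, so the
  two right derivatives coincide and are nonnegative. If G p < F p, some x0 < 0 has
  x0 p - phi x0 > G p >= - phi 0. By convexity phi lies above the secant through x0 and 0 on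
  x > 0.
*)

lemma convex_fun_ge_secant:
  assumes "convex_fun g" "a < b" "b < x" "g a = ereal ga" "g b = ereal gb"
  shows "ereal (gb + (x - b) * (gb - ga) / (b - a)) \<le> g x"
proof -
  define t where "t = (b - a) / (x - a)"
  have t: "0 < t" "t \<le> 1"
    using assms(2,3) by (auto simp: t_def field_simps)
  have t_scaled: "t * (x - a) = b - a"
    using assms(2,3) by (simp add: t_def)
  hence b_eq: "b = (1 - t) * a + t * x"
    by (simp add: algebra_simps)
  have conv: "g b \<le> ereal (1 - t) * g a + ereal t * g x"
    using assms(1) t unfolding convex_fun_def b_eq by (metis less_imp_le)
  show ?thesis
  proof (cases "g x")
    case (real gx)
    have "gb \<le> (1 - t) * ga + t * gx" using conv assms(4,5) real by simp
    hence "(x - a) * gb \<le> (x - a) * ((1 - t) * ga + t * gx)"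
      using assms(2,3) by (intro mult_left_mono) auto
    also have "\<dots> = (x - a) * ga + (t * (x - a)) * (gx - ga)"
      by (simp add: algebra_simps)
    also have "\<dots> = (x - b) * ga + (b - a) * gx"
      unfolding t_scaled by (simp add: algebra_simps)
    finally have "(x - a) * gb \<le> (x - b) * ga + (b - a) * gx" .
    hence "gb + (x - b) * (gb - ga) / (b - a) \<le> gx"
      using assms(2,3) by (simp add: field_simps)
    thus ?thesis using real by simp
  qed (use conv assms t in auto)
qed

lemma convex_conj_ge: "ereal (x * q) - g x \<le> convex_conj g q"
  unfolding convex_conj_def by (rule SUP_upper) simp

lemma convex_conj_up_ge: "0 \<le> x \<Longrightarrow> ereal (x * q) - g x \<le> convex_conj (up g) q"
  using convex_conj_ge[of x q "up g"] by (simp add: up_def)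

lemma convex_conj_up_le: "convex_conj (up g) q \<le> convex_conj g q"
  unfolding convex_conj_def by (rule SUP_mono) (auto simp: up_def)

lemma mono_convex_conj_up: "mono (convex_conj (up g))"
proof (rule monoI)
  fix q q' :: real
  assume "q \<le> q'"
  show "convex_conj (up g) q \<le> convex_conj (up g) q'"
    unfolding convex_conj_def
  proof (rule SUP_mono)
    fix x
    have "ereal (x * q) - up g x \<le> ereal (x * q') - up g x"
      using \<open>q \<le> q'\<close> by (cases "0 \<le> x") (auto simp: up_def mult_left_mono intro: ereal_minus_mono)
    thus "\<exists>y\<in>UNIV. ereal (x * q) - up g x \<le> ereal (y * q') - up g y" by blast
  qed
qed

lemma convex_conj_le_max_up:
  assumes "q \<le> q'"
  shows "convex_conj g q' \<le> max (convex_conj g q) (convex_conj (up g) q')"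
  unfolding convex_conj_def[of g q']
proof (rule SUP_least)
  fix x
  show "ereal (x * q') - g x \<le> max (convex_conj g q) (convex_conj (up g) q')"
  proof (cases "0 \<le> x")
    case True
    thus ?thesis using convex_conj_up_ge[of x q' g] by (simp add: le_max_iff_disj)
  next
    case False
    with assms have "ereal (x * q') - g x \<le> ereal (x * q) - g x"
      by (auto intro!: ereal_minus_mono mult_left_mono_neg)
    also have "\<dots> \<le> convex_conj g q" by (rule convex_conj_ge)
    finally show ?thesis by (simp add: le_max_iff_disj)
  qed
qed

lemma convex_conj_up_eq_below_secant_slope:
  assumes "convex_fun g" "x0 < 0" "g x0 = ereal a" "g 0 = ereal c"
    and "q \<le> (c - a) / (- x0)"
  shows "convex_conj (up g) q = ereal (- c)"
proof (rule antisym)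
  show "convex_conj (up g) q \<le> ereal (- c)"
    unfolding convex_conj_def
  proof (rule SUP_least)
    fix x :: real
    consider "x < 0" | "x = 0" | "0 < x" by linarith
    thus "ereal (x * q) - up g x \<le> ereal (- c)"
    proof cases
      case 3
      have "ereal (c + x * (c - a) / (0 - x0)) \<le> g x"
        using convex_fun_ge_secant[OF assms(1,2) 3 assms(3,4)] by simp
      moreover have "x * q \<le> x * (c - a) / (- x0)"
        using mult_left_mono[OF assms(5), of x] 3 by simp
      ultimately show ?thesis
        using 3 by (cases "g x") (auto simp: up_def)
    qed (auto simp: up_def assms(4))
  qed
  show "ereal (- c) \<le> convex_conj (up g) q"
    using convex_conj_up_ge[of 0 q g] assms(4) by simp
qed

lemma convex_conj_up_eventually_const:
  assumes "proper_fun g" "convex_fun g" "g 0 < \<infinity>"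
    and "convex_conj (up g) p < convex_conj g p"
  shows "\<forall>\<^sub>F h in at_right 0. convex_conj (up g) (p + h) = convex_conj (up g) p"
proof -
  obtain x0 where x0: "convex_conj (up g) p < ereal (x0 * p) - g x0"
    using assms(4) unfolding convex_conj_def[of g] by (auto simp: less_SUP_iff)
  have "x0 < 0"
    using convex_conj_up_ge[of x0 p g] x0 by (cases "0 \<le> x0") auto
  obtain a where a: "g x0 = ereal a"
    using x0 assms(1) by (cases "g x0") (auto simp: proper_fun_def)
  obtain c where c: "g 0 = ereal c"
    using assms(1,3) by (cases "g 0") (auto simp: proper_fun_def)
  have "ereal (- c) \<le> convex_conj (up g) p"
    using convex_conj_up_ge[of 0 p g] c by simp
  also have "\<dots> < ereal (x0 * p - a)"
    using x0 a by simp
  finally have "(- x0) * p < c - a"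
    by simp
  hence "p < (c - a) / (- x0)"
    using \<open>x0 < 0\<close> by (metis neg_0_less_iff_less pos_less_divide_eq mult.commute)
  hence "\<forall>\<^sub>F h in at_right 0. h \<in> {0<..<(c - a) / (- x0) - p}"
    by (intro eventually_at_right_real) simp
  thus ?thesis
  proof (rule eventually_mono)
    fix h assume "h \<in> {0<..<(c - a) / (- x0) - p}"
    thus "convex_conj (up g) (p + h) = convex_conj (up g) p"
      using convex_conj_up_eq_below_secant_slope[OF assms(2) \<open>x0 < 0\<close> a c] by simp
  qed
qed

lemma has_rderiv_nonneg:
  assumes "has_rderiv g p D" "\<forall>\<^sub>F h in at_right 0. g p \<le> g (p + h)"
  shows "0 \<le> D"
proof -
  obtain gp where gp: "g p = ereal gp"
    using assms(1) unfolding has_rderiv_def by (cases "g p") auto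
  have "\<forall>\<^sub>F h in at_right 0. 0 \<le> (g (p + h) - g p) / ereal h"
    using assms(2) eventually_at_right_less
  proof eventually_elim
    case (elim h)
    thus ?case using gp by (cases "g (p + h)") auto
  qed
  with assms(1) show ?thesis
    unfolding has_rderiv_def by (auto intro: tendsto_lowerbound)
qed

lemma has_rderiv_nonpos:
  assumes "has_rderiv g p D" "\<forall>\<^sub>F h in at_right 0. g (p + h) \<le> g p"
  shows "D \<le> 0"
proof -
  obtain gp where gp: "g p = ereal gp"
    using assms(1) unfolding has_rderiv_def by (cases "g p") auto
  have "\<forall>\<^sub>F h in at_right 0. (g (p + h) - g p) / ereal h \<le> 0"
    using assms(2) eventually_at_right_less
  proof eventually_elim
    case (elim h)
    thus ?case using gp by (cases "g (p + h)") (auto simp: divide_nonpos_pos)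
  qed
  with assms(1) show ?thesis
    unfolding has_rderiv_def by (auto intro: tendsto_upperbound)
qed

lemma has_rderiv_unique_eventually_eq:
  assumes "has_rderiv f p D" "has_rderiv g p E" "f p = g p"
    and "\<forall>\<^sub>F h in at_right 0. f (p + h) = g (p + h)"
  shows "D = E"
proof -
  have quotients_eq: "\<forall>\<^sub>F h in at_right 0. (f (p + h) - f p) / ereal h = (g (p + h) - g p) / ereal h"
    using assms(4) by eventually_elim (simp add: assms(3))
  have "((\<lambda>h. (g (p + h) - g p) / ereal h) \<longlongrightarrow> D) (at_right 0)"
    using assms(1) tendsto_cong[OF quotients_eq] unfolding has_rderiv_def by simp
  with assms(2) show ?thesis
    unfolding has_rderiv_def using tendsto_unique[OF trivial_limit_at_right_real] by blast
qed

theorem lemma5: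
  fixes \<phi> :: "real \<Rightarrow> ereal" and p :: real and D D\<^sub>u\<^sub>p :: ereal
  assumes "proper_fun \<phi>" and "convex_fun \<phi>" and "lsc_fun \<phi>"
    and "\<phi> 0 < \<infinity>"
    and "has_rderiv (convex_conj \<phi>) p D"
    and "has_rderiv (convex_conj (up \<phi>)) p D\<^sub>u\<^sub>p"
  shows "D\<^sub>u\<^sub>p = max 0 D"
proof -
  let ?F = "convex_conj \<phi>" and ?G = "convex_conj (up \<phi>)"
  have G_mono: "\<forall>\<^sub>F h in at_right 0. ?G p \<le> ?G (p + h)"
    using eventually_at_right_less by eventually_elim (simp add: monoD[OF mono_convex_conj_up])
  consider (eq) "?G p = ?F p" | (less) "?G p < ?F p"
    using convex_conj_up_le[of \<phi> p] by fastforce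
  then show ?thesis
  proof cases
    case eq
    have "\<forall>\<^sub>F h in at_right 0. ?F (p + h) = ?G (p + h)"
      using G_mono eventually_at_right_less
    proof eventually_elim
      case (elim h)
      show ?case
        using convex_conj_le_max_up[of p "p + h" \<phi>] convex_conj_up_le[of \<phi> "p + h"] eq elim
        by (simp add: max_def)
    qed
    hence "D = D\<^sub>u\<^sub>p"
      using has_rderiv_unique_eventually_eq[OF assms(5,6)] eq by simp
    moreover have "0 \<le> D\<^sub>u\<^sub>p"
      using has_rderiv_nonneg[OF assms(6) G_mono] .
    ultimately show ?thesis by (simp add: max_def)
  next
    case less
    have G_const: "\<forall>\<^sub>F h in at_right 0. ?G (p + h) = ?G p"
      using convex_conj_up_eventually_const[OF assms(1,2,4) less] .
    have "D\<^sub>u\<^sub>p = 0"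
    proof (rule antisym)
      show "D\<^sub>u\<^sub>p \<le> 0"
        using G_const by (intro has_rderiv_nonpos[OF assms(6)]) (auto elim: eventually_mono)
      show "0 \<le> D\<^sub>u\<^sub>p"
        using G_mono by (rule has_rderiv_nonneg[OF assms(6)])
    qed
    moreover have "D \<le> 0"
    proof (rule has_rderiv_nonpos[OF assms(5)])
      show "\<forall>\<^sub>F h in at_right 0. ?F (p + h) \<le> ?F p"
        using G_const eventually_at_right_less
      proof eventually_elim
        case (elim h)
        thus ?case
          using convex_conj_le_max_up[of p "p + h" \<phi>] convex_conj_up_le[of \<phi> p] by simp
      qed
    qed
    ultimately show ?thesis by simp
  qed
qed

end
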